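(* A diamond-free graph is minimally unbalanced if and only if it is either an odd hole or an HOH-free multisun.
   Context: A $\{0,1\}$-matrix is balanced if it has no square submatrix of odd order with exactly two 1's in every row and every column. The clique-matrix $A_G$ of a graph $G$ has columns indexed by $V(G)$ and rows the incidence vectors of the maximal cliques of $G$. A graph is balanced if its clique-matrix is balanced; it is minimally unbalanced if it is not balanced but every proper induced subgraph is balanced. A graph is diamond-free if it has no induced subgraph isomorphic to $K_4$ minus an edge. An odd hole is an induced cycle of odd length at least $5$. A multisun is a diamond-free graph $G$ of odd order whose maximal cliques of size $2$ form the edge set of a Hamiltonian cycle $C$ of $G$ (the rim); all other maximal cliques consist of pairwise nonconsecutive vertices of $C$ and are called inscribed cliques. A sub-multisun of $G$ is obtained by deleting the edge sets of some, but not all, inscribed cliques. $G$ is HOH-free if neither $G$ nor any of its sub-multisuns contains an odd hole as an induced subgraph. *)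

theory Defs
  imports Main
begin

definition graph :: "'a set \<Rightarrow> 'a set set \<Rightarrow> bool" where
  "graph V E \<longleftrightarrow> finite V \<and> (\<forall>e\<in>E. e \<subseteq> V \<and> card e = 2)"

definition adj :: "'a set set \<Rightarrow> 'a \<Rightarrow> 'a \<Rightarrow> bool" where
  "adj E u v \<longleftrightarrow> {u, v} \<in> E"

definition induced_edges :: "'a set set \<Rightarrow> 'a set \<Rightarrow> 'a set set" where
  "induced_edges E S = {e \<in> E. e \<subseteq> S}"

definition is_clique :: "'a set \<Rightarrow> 'a set set \<Rightarrow> 'a set \<Rightarrow> bool" where
  "is_clique V E K \<longleftrightarrow> K \<subseteq> V \<and> (\<forall>u\<in>K. \<forall>v\<in>K. u \<noteq> v \<longrightarrow> adj E u v)"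

definition maximal_clique :: "'a set \<Rightarrow> 'a set set \<Rightarrow> 'a set \<Rightarrow> bool" where
  "maximal_clique V E K \<longleftrightarrow> is_clique V E K \<and> (\<forall>K'. is_clique V E K' \<and> K \<subseteq> K' \<longrightarrow> K' = K)"

definition balanced_matrix :: "'r set \<Rightarrow> 'c set \<Rightarrow> ('r \<Rightarrow> 'c \<Rightarrow> bool) \<Rightarrow> bool" where
  "balanced_matrix Rows Cols M \<longleftrightarrow>
     \<not> (\<exists>R C. R \<subseteq> Rows \<and> C \<subseteq> Cols \<and> finite R \<and> finite C \<and>
            card R = card C \<and> odd (card C) \<and>
            (\<forall>r\<in>R. card {c\<in>C. M r c} = 2) \<and>
            (\<forall>c\<in>C. card {r\<in>R. M r c} = 2))"

text \<open>Clique matrix: rows indexed by the maximal cliques, columns by the vertices,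
  row K is the incidence vector of K.\<close>
definition balanced_graph :: "'a set \<Rightarrow> 'a set set \<Rightarrow> bool" where
  "balanced_graph V E \<longleftrightarrow> balanced_matrix {K. maximal_clique V E K} V (\<lambda>K v. v \<in> K)"

definition minimally_unbalanced :: "'a set \<Rightarrow> 'a set set \<Rightarrow> bool" where
  "minimally_unbalanced V E \<longleftrightarrow> \<not> balanced_graph V E \<and>
     (\<forall>S. S \<subset> V \<longrightarrow> balanced_graph S (induced_edges E S))"

definition diamond_free :: "'a set \<Rightarrow> 'a set set \<Rightarrow> bool" where
  "diamond_free V E \<longleftrightarrow> \<not> (\<exists>a\<in>V. \<exists>b\<in>V. \<exists>c\<in>V. \<exists>d\<in>V. distinct [a, b, c, d] \<and>
      adj E a b \<and> adj E a c \<and> adj E a d \<and> adj E b c \<and> adj E b d \<and> \<not> adj E c d)"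

definition cycle_edges :: "'a list \<Rightarrow> 'a set set" where
  "cycle_edges vs = {{vs ! i, vs ! ((i + 1) mod length vs)} | i. i < length vs}"

definition odd_hole :: "'a set \<Rightarrow> 'a set set \<Rightarrow> bool" where
  "odd_hole V E \<longleftrightarrow> (\<exists>vs. distinct vs \<and> set vs = V \<and> length vs \<ge> 5 \<and> odd (length vs) \<and>
      E = cycle_edges vs)"

definition contains_odd_hole :: "'a set \<Rightarrow> 'a set set \<Rightarrow> bool" where
  "contains_odd_hole V E \<longleftrightarrow> (\<exists>S\<subseteq>V. odd_hole S (induced_edges E S))"

definition multisun :: "'a set \<Rightarrow> 'a set set \<Rightarrow> bool" where
  "multisun V E \<longleftrightarrow> diamond_free V E \<and> odd (card V) \<and>
     (\<exists>vs. distinct vs \<and> set vs = V \<and> length vs \<ge> 3 \<and> cycle_edges vs \<subseteq> E \<and>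
        {K. maximal_clique V E K \<and> card K = 2} = cycle_edges vs \<and>
        (\<forall>K. maximal_clique V E K \<and> card K \<noteq> 2 \<longrightarrow>
             (\<forall>u\<in>K. \<forall>v\<in>K. u \<noteq> v \<longrightarrow> {u, v} \<notin> cycle_edges vs)))"

text \<open>Inscribed cliques: maximal cliques other than the rim edges (the size-2 maximal cliques).\<close>
definition inscribed_cliques :: "'a set \<Rightarrow> 'a set set \<Rightarrow> 'a set set" where
  "inscribed_cliques V E = {K. maximal_clique V E K \<and> card K \<noteq> 2}"

definition clique_edges :: "'a set \<Rightarrow> 'a set set" where
  "clique_edges K = {e. e \<subseteq> K \<and> card e = 2}"

definition sub_multisun_edges :: "'a set \<Rightarrow> 'a set set \<Rightarrow> 'a set set \<Rightarrow> bool" where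
  "sub_multisun_edges V E E' \<longleftrightarrow> (\<exists>D. D \<noteq> {} \<and> D \<subset> inscribed_cliques V E \<and>
      E' = E - \<Union> (clique_edges ` D))"

definition HOH_free :: "'a set \<Rightarrow> 'a set set \<Rightarrow> bool" where
  "HOH_free V E \<longleftrightarrow> \<not> contains_odd_hole V E \<and>
     (\<forall>E'. sub_multisun_edges V E E' \<longrightarrow> \<not> contains_odd_hole V E')"

end

theory Submission
  imports Defs
begin

text \<open>In a diamond-free graph every edge lies in a unique maximal clique. Hence an odd square
  submatrix of the clique matrix with two ones per row and column yields a 2-regular relation on
  an odd set of vertices, which contains an odd cycle; along this cycle consecutive vertices have no
  common neighbour on the cycle. Conversely such an "odd clique cycle" makes the subgraph it induces
  unbalanced. So a diamond-free graph is minimally unbalanced iff it is spanned by an odd clique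
  cycle and every odd clique cycle spans it.

  For such a graph, the spanning cycle is the rim of a multisun: every other edge has a common
  neighbour with its endpoints (otherwise it would shortcut the cycle), so the maximal cliques of
  size two are exactly the rim edges. An odd hole in the graph or in a sub-multisun is itself an odd
  clique cycle, hence spans, and this forces the graph to be that hole. Conversely, in an HOH-free
  multisun a shortest non-spanning odd clique cycle would become an induced odd hole after deleting
  the inscribed cliques containing its chords; they cannot be all of them, since then the cycle
  would run along the rim.\<close>

section \<open>Cycles in a relation\<close>

definition is_cycle :: "('a \<Rightarrow> 'a \<Rightarrow> bool) \<Rightarrow> 'a list \<Rightarrow> bool" where
  "is_cycle R ws \<longleftrightarrow> distinct ws \<and> 3 \<le> length ws \<and>
     (\<forall>i<length ws. R (ws!i) (ws!(Suc i mod length ws)))"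

lemma Suc_mod_if: "i < k \<Longrightarrow> Suc i mod k = (if Suc i = k then 0 else Suc i)"
  by auto

lemma Suc_mod_eq_iff_prev:
  assumes "i < k" "j < k"
  shows "Suc j mod k = i \<longleftrightarrow> j = (if i = 0 then k - 1 else i - 1)"
  using assms by (cases "Suc j = k") auto

lemma is_cycle_mono: "is_cycle R ws \<Longrightarrow> (\<And>x y. R x y \<Longrightarrow> S x y) \<Longrightarrow> is_cycle S ws"
  unfolding is_cycle_def by blast

lemma is_cycle_rotate:
  assumes cyc: "is_cycle R ws"
  shows "is_cycle R (rotate n ws)"
  unfolding is_cycle_def
proof (intro conjI allI impI)
  let ?k = "length ws"
  have k: "3 \<le> ?k" using cyc by (simp add: is_cycle_def)
  show "distinct (rotate n ws)" "3 \<le> length (rotate n ws)"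
    using cyc by (simp_all add: is_cycle_def)
  fix i assume "i < length (rotate n ws)"
  hence i: "i < ?k" by simp
  have "(n + Suc i mod ?k) mod ?k = Suc ((n + i) mod ?k) mod ?k"
    by (metis add_Suc_right mod_Suc_eq mod_add_right_eq)
  moreover have "(n + i) mod ?k < ?k" "Suc i mod ?k < ?k" using k by (auto intro: mod_less_divisor)
  ultimately show "R (rotate n ws ! i) (rotate n ws ! (Suc i mod length (rotate n ws)))"
    using cyc i by (simp add: is_cycle_def nth_rotate)
qed

lemma is_cycle_append_two:
  assumes "distinct ws" "ws \<noteq> []" "\<forall>m. Suc m < length ws \<longrightarrow> R (ws!m) (ws!Suc m)"
    "R (last ws) x" "R x y" "R y (hd ws)" "x \<notin> set ws" "y \<notin> set ws" "x \<noteq> y"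
  shows "is_cycle R (ws @ [x,y])"
  unfolding is_cycle_def
proof (intro conjI allI impI)
  show "distinct (ws @ [x, y])" using assms by simp
  show "3 \<le> length (ws @ [x, y])" using assms by (cases ws) auto
  fix i assume i: "i < length (ws @ [x, y])"
  let ?k = "length ws"
  have ends: "last ws = ws ! (?k - 1)" "hd ws = ws ! 0"
    using assms by (auto simp: last_conv_nth hd_conv_nth)
  have "i < ?k + 2" using i by simp
  then consider "Suc i < ?k" | "Suc i = ?k" | "i = ?k" | "i = Suc ?k" by linarith
  then show "R ((ws @ [x, y]) ! i) ((ws @ [x, y]) ! (Suc i mod length (ws @ [x, y])))"
  proof cases
    case 2
    then have "i = ?k - 1" by simp
    then show ?thesis using assms ends 2 by (simp add: nth_append)
  qed (use assms ends in \<open>auto simp: nth_append\<close>)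
qed

lemma cycle_pair_eq_imp_eq:
  assumes "distinct ws" "3 \<le> length ws" "i < length ws" "j < length ws"
    "{ws!i, ws!(Suc i mod length ws)} = {ws!j, ws!(Suc j mod length ws)}"
  shows "i = j"
proof -
  let ?k = "length ws"
  have succ: "Suc i mod ?k < ?k" "Suc j mod ?k < ?k" using assms(2) by (auto intro: mod_less_divisor)
  have "ws!i = ws!j \<or> (ws!i = ws!(Suc j mod ?k) \<and> ws!(Suc i mod ?k) = ws!j)"
    using assms(5) by (auto simp: doubleton_eq_iff)
  then have "i = j \<or> (i = Suc j mod ?k \<and> Suc i mod ?k = j)"
    using assms succ by (simp add: nth_eq_iff_index_eq)
  then show ?thesis using assms(2-4) by (auto simp: Suc_mod_if split: if_splits)
qed

lemma cycle_edges_conv_image: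
  "cycle_edges ws = (\<lambda>i. {ws!i, ws!(Suc i mod length ws)}) ` {..<length ws}"
  unfolding cycle_edges_def by auto

lemma card_cycle_edges:
  assumes "distinct ws" "3 \<le> length ws"
  shows "card (cycle_edges ws) = length ws"
proof -
  have "inj_on (\<lambda>i. {ws!i, ws!(Suc i mod length ws)}) {..<length ws}"
    using cycle_pair_eq_imp_eq[OF assms] by (auto simp: inj_on_def)
  thus ?thesis unfolding cycle_edges_conv_image by (simp add: card_image)
qed

lemma cycle_edges_nth_consecutive:
  assumes dist: "distinct hs" and pq: "p < length hs" "q < length hs"
    and e: "{hs!p, hs!q} \<in> cycle_edges hs"
  shows "q = Suc p mod length hs \<or> p = Suc q mod length hs"
proof -
  let ?k = "length hs"
  obtain i where i: "i < ?k" "{hs!p, hs!q} = {hs!i, hs!(Suc i mod ?k)}"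
    using e unfolding cycle_edges_conv_image by blast
  have "Suc i mod ?k < ?k" using i(1) by (intro mod_less_divisor) linarith
  moreover from i(2) have "(hs!p = hs!i \<and> hs!q = hs!(Suc i mod ?k)) \<or>
      (hs!p = hs!(Suc i mod ?k) \<and> hs!q = hs!i)"
    by (auto simp: doubleton_eq_iff)
  ultimately show ?thesis using nth_eq_iff_index_eq[OF dist] pq i(1) by metis
qed

lemma cycle_edges_triangle_free:
  assumes dist: "distinct hs" and len: "4 \<le> length hs"
    and pqr: "p < length hs" "q < length hs" "r < length hs" "p \<noteq> q" "q \<noteq> r" "p \<noteq> r"
    and e: "{hs!p, hs!q} \<in> cycle_edges hs" "{hs!q, hs!r} \<in> cycle_edges hs"
      "{hs!p, hs!r} \<in> cycle_edges hs"
  shows False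
proof -
  let ?k = "length hs"
  have neighbours: "b = Suc a \<or> a = Suc b \<or> (a = ?k - 1 \<and> b = 0) \<or> (b = ?k - 1 \<and> a = 0)"
    if "a < ?k" "b < ?k" "{hs!a, hs!b} \<in> cycle_edges hs" for a b
    using cycle_edges_nth_consecutive[OF dist that] that(1,2)
    by (auto simp: Suc_mod_if split: if_splits)
  show False using neighbours[of p q] neighbours[of q r] neighbours[of p r] pqr e len
    by linarith
qed

lemma cycle_along_cycle_edges_spans:
  assumes dvs: "distinct vs" and len_vs: "3 \<le> length vs" and cyc: "is_cycle R ws"
    and sub: "set ws \<subseteq> set vs"
    and rim: "\<forall>i<length ws. {ws!i, ws!(Suc i mod length ws)} \<in> cycle_edges vs"
  shows "set ws = set vs"
proof -
  let ?L = "length vs" and ?k = "length ws"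
  have dws: "distinct ws" and k3: "3 \<le> ?k" using cyc by (auto simp: is_cycle_def)
  have step: "vs!(Suc a mod ?L) \<in> set ws" if a: "a < ?L" "vs!a \<in> set ws" for a
  proof -
    obtain j where j: "j < ?k" "ws!j = vs!a" using a(2) by (auto simp: in_set_conv_nth)
    define jp where "jp = (if j = 0 then ?k - 1 else j - 1)"
    have jpk: "jp < ?k" using j k3 unfolding jp_def by auto
    have sjp: "Suc jp mod ?k = j" using Suc_mod_eq_iff_prev[OF j(1) jpk] jp_def by simp
    have jnk: "Suc j mod ?k < ?k" using j(1) by (intro mod_less_divisor) linarith
    have jnp: "Suc j mod ?k \<noteq> jp" using j k3 unfolding jp_def by (auto simp: Suc_mod_if)
    obtain q1 where q1: "q1 < ?L" "ws!(Suc j mod ?k) = vs!q1"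
      using sub jnk nth_mem by (metis in_set_conv_nth subsetD)
    obtain q2 where q2: "q2 < ?L" "ws!jp = vs!q2"
      using sub jpk nth_mem by (metis in_set_conv_nth subsetD)
    have "q1 \<noteq> q2" using q1 q2 jnp dws jnk jpk nth_eq_iff_index_eq by metis
    moreover have "q1 = Suc a mod ?L \<or> a = Suc q1 mod ?L"
      using cycle_edges_nth_consecutive[OF dvs a(1) q1(1)] rim j q1(2) by metis
    moreover have "q2 = Suc a mod ?L \<or> a = Suc q2 mod ?L"
      using cycle_edges_nth_consecutive[OF dvs q2(1) a(1)] rim jpk sjp j q2(2) by metis
    ultimately have "q1 = Suc a mod ?L \<or> q2 = Suc a mod ?L"
      using Suc_mod_eq_iff_prev[OF a(1) q1(1)] Suc_mod_eq_iff_prev[OF a(1) q2(1)] by auto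
    thus ?thesis using q1 q2 jnk jpk by (metis nth_mem)
  qed
  obtain a0 where a0: "a0 < ?L" "vs!a0 \<in> set ws"
    using sub k3 by (metis in_set_conv_nth length_greater_0_conv list.size(3)
        not_numeral_le_zero nth_mem subsetD)
  have reach: "vs!((a0 + n) mod ?L) \<in> set ws" for n
  proof (induction n)
    case 0 thus ?case using a0 by simp
  next
    case (Suc n)
    have "(a0 + n) mod ?L < ?L" using len_vs by (intro mod_less_divisor) linarith
    from step[OF this Suc] show ?case by (simp add: mod_Suc_eq)
  qed
  have "set vs \<subseteq> set ws"
  proof
    fix x assume "x \<in> set vs"
    then obtain b where b: "b < ?L" "x = vs!b" by (auto simp: in_set_conv_nth)
    have "(a0 + (b + ?L - a0)) mod ?L = b" using b a0 by simp
    thus "x \<in> set ws" using reach[of "b + ?L - a0"] b by simp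
  qed
  thus ?thesis using sub by blast
qed


lemma is_cycle_split_at_chord:
  assumes cyc: "is_cycle R ws" and j: "2 \<le> j" "j + 2 \<le> length ws"
    and chord: "R (ws!0) (ws!j)" "R (ws!j) (ws!0)"
  shows "is_cycle R (take (Suc j) ws)" "is_cycle R (drop j ws @ [ws!0])"
proof -
  let ?k = "length ws"
  have dws: "distinct ws" and k3: "3 \<le> ?k"
    and step: "\<And>i. i < ?k \<Longrightarrow> R (ws!i) (ws!(Suc i mod ?k))"
    using cyc unfolding is_cycle_def by auto
  show "is_cycle R (take (Suc j) ws)"
    unfolding is_cycle_def
  proof (intro conjI allI impI)
    show "distinct (take (Suc j) ws)" using dws by simp
    show "3 \<le> length (take (Suc j) ws)" using j by simp
    fix m assume "m < length (take (Suc j) ws)"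
    hence m: "m \<le> j" and len: "length (take (Suc j) ws) = Suc j" using j by auto
    show "R (take (Suc j) ws ! m) (take (Suc j) ws ! (Suc m mod length (take (Suc j) ws)))"
    proof (cases "m = j")
      case True
      then show ?thesis using chord(2) len by simp
    next
      case False
      hence "m < j" using m by simp
      moreover have "R (ws!m) (ws!(Suc m mod ?k))" using \<open>m < j\<close> j by (intro step) simp
      ultimately show ?thesis using len j by simp
    qed
  qed
  show "is_cycle R (drop j ws @ [ws!0])"
    unfolding is_cycle_def
  proof (intro conjI allI impI)
    have "ws!0 \<notin> set (drop j ws)"
    proof
      assume "ws!0 \<in> set (drop j ws)"
      then obtain t where "t < ?k - j" "ws!(j+t) = ws!0" using j by (auto simp: in_set_conv_nth)
      then show False using nth_eq_iff_index_eq[OF dws, of "j+t" 0] j by fastforce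
    qed
    thus "distinct (drop j ws @ [ws!0])" using dws by simp
    show "3 \<le> length (drop j ws @ [ws!0])" using j by simp
    fix m assume m: "m < length (drop j ws @ [ws!0])"
    have len: "length (drop j ws @ [ws!0]) = ?k - j + 1" by simp
    have inner: "(drop j ws @ [ws!0]) ! t = ws!(j+t)" if "t < ?k - j" for t
      using that j by (simp add: nth_append)
    have last: "(drop j ws @ [ws!0]) ! (?k - j) = ws!0" using j by (simp add: nth_append)
    consider "Suc m < ?k - j" | "Suc m = ?k - j" | "m = ?k - j" using m len by linarith
    then show "R ((drop j ws @ [ws!0]) ! m)
        ((drop j ws @ [ws!0]) ! (Suc m mod length (drop j ws @ [ws!0])))"
    proof cases
      case 1
      moreover have "R (ws!(j+m)) (ws!(Suc (j+m) mod ?k))" using 1 by (intro step) simp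
      ultimately show ?thesis using inner len by simp
    next
      case 2
      moreover have "R (ws!(?k-1)) (ws!(Suc (?k-1) mod ?k))" using k3 by (intro step) simp
      moreover have "j + m = ?k - 1" using 2 j by simp
      moreover have "Suc (?k - 1) = ?k" using k3 by simp
      ultimately show ?thesis using inner[of m] last len by simp
    next
      case 3
      thus ?thesis using last inner[of 0] len chord(1) j by simp
    qed
  qed
qed

lemma chord_offset_exists:
  assumes "a < k" "b < k" "a \<noteq> b" "b \<noteq> Suc a mod k" "a \<noteq> Suc b mod k"
  shows "\<exists>j. 2 \<le> j \<and> j + 2 \<le> k \<and> (a + j) mod k = b"
proof (cases "a < b")
  case True
  have "b - a + 2 \<le> k" "2 \<le> b - a"
    using True assms by (auto simp: Suc_mod_if split: if_splits)
  moreover have "(a + (b - a)) mod k = b" using True assms(2) by simp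
  ultimately show ?thesis by blast
next
  case False
  have "b + k - a + 2 \<le> k" "2 \<le> b + k - a"
    using False assms by (auto simp: Suc_mod_if split: if_splits)
  moreover have "(a + (b + k - a)) mod k = b" using False assms(1,2) by simp
  ultimately show ?thesis by blast
qed

text \<open>A chord of an odd cycle splits it into two shorter cycles, one of which is odd.\<close>
lemma is_cycle_odd_chord_shortcut:
  assumes cyc: "is_cycle R ws" and odd: "odd (length ws)"
    and ab: "a < length ws" "b < length ws" "a \<noteq> b" "b \<noteq> Suc a mod length ws"
      "a \<noteq> Suc b mod length ws"
    and chord: "R (ws!a) (ws!b)" "R (ws!b) (ws!a)"
  shows "\<exists>ws'. is_cycle R ws' \<and> odd (length ws') \<and> length ws' < length ws \<and>
    set ws' \<subseteq> set ws"
proof -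
  let ?k = "length ws"
  obtain j where j: "2 \<le> j" "j + 2 \<le> ?k" "(a + j) mod ?k = b"
    using chord_offset_exists[OF ab] by blast
  define rs where "rs = rotate a ws"
  have cyc_rs: "is_cycle R rs" using is_cycle_rotate[OF cyc] unfolding rs_def .
  have len: "length rs = ?k" and set_rs: "set rs = set ws" unfolding rs_def by simp_all
  have "ws \<noteq> []" using ab(1) by auto
  hence "rs!0 = ws!a" "rs!j = ws!b"
    unfolding rs_def using ab j nth_rotate[of 0 ws a] nth_rotate[of j ws a] by auto
  hence splits: "is_cycle R (take (Suc j) rs)" "is_cycle R (drop j rs @ [rs!0])"
    using is_cycle_split_at_chord[OF cyc_rs] j len chord by simp_all
  have "set (take (Suc j) rs) \<subseteq> set ws" "set (drop j rs @ [rs!0]) \<subseteq> set ws"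
    using set_rs set_take_subset[of "Suc j" rs] set_drop_subset[of j rs] len ab(1)
    by (auto simp: \<open>rs!0 = ws!a\<close>)
  moreover have "odd (Suc j) \<or> odd (?k - j + 1)" using odd j(1,2) by presburger
  ultimately show ?thesis
  proof (elim conjE disjE)
    assume "odd (Suc j)" "set (take (Suc j) rs) \<subseteq> set ws"
    then show ?thesis using splits(1) j len by (intro exI[of _ "take (Suc j) rs"]) auto
  next
    assume "odd (?k - j + 1)" "set (drop j rs @ [rs!0]) \<subseteq> set ws"
    then show ?thesis using splits(2) j len by (intro exI[of _ "drop j rs @ [rs!0]"]) auto
  qed
qed


section \<open>Odd cycles in 2-regular relations\<close>

text \<open>A cycle that uses the added edge cd is rerouted along the path c-a-b-d.\<close>
lemma is_cycle_reroute_edge: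
  assumes cyc: "is_cycle R' ws"
    and R': "\<And>x y. R' x y \<Longrightarrow> R x y \<or> (x = c \<and> y = d) \<or> (x = d \<and> y = c)"
    and sym: "\<And>x y. R x y \<Longrightarrow> R y x" and path: "R c a" "R a b" "R b d"
    and ab: "a \<notin> set ws" "b \<notin> set ws" "a \<noteq> b"
  shows "\<exists>ws'. is_cycle R ws' \<and> (length ws' = length ws \<or> length ws' = length ws + 2) \<and>
    set ws' \<subseteq> set ws \<union> {a, b}"
proof (cases "\<forall>i<length ws. R (ws!i) (ws!(Suc i mod length ws))")
  case True
  then show ?thesis using cyc unfolding is_cycle_def by blast
next
  case False
  let ?k = "length ws"
  have k3: "3 \<le> ?k" using cyc unfolding is_cycle_def by simp
  obtain i where i: "i < ?k" "\<not> R (ws!i) (ws!(Suc i mod ?k))" using False by blast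
  hence cd: "(ws!i = c \<and> ws!(Suc i mod ?k) = d) \<or> (ws!i = d \<and> ws!(Suc i mod ?k) = c)"
    using cyc R' unfolding is_cycle_def by blast
  define rs where "rs = rotate (Suc i mod ?k) ws"
  have cyc_rs: "is_cycle R' rs" using is_cycle_rotate[OF cyc] unfolding rs_def .
  have len: "length rs = ?k" and dist: "distinct rs" and set_rs: "set rs = set ws"
    using cyc_rs unfolding rs_def is_cycle_def by simp_all
  have "ws \<noteq> []" using k3 by auto
  have last: "rs ! (?k - 1) = ws ! i"
  proof -
    have "(Suc i mod ?k + (?k - 1)) mod ?k = i"
    proof (cases "Suc i = ?k")
      case False
      then have "Suc i mod ?k + (?k - 1) = i + ?k" using i(1) k3 by simp
      then show ?thesis using i(1) by simp
    qed simp
    thus ?thesis unfolding rs_def using k3 by (simp add: nth_rotate)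
  qed
  have first: "rs ! 0 = ws ! (Suc i mod ?k)"
    unfolding rs_def using \<open>ws \<noteq> []\<close> nth_rotate[of 0 ws "Suc i mod ?k"] by simp
  have path_rs: "\<forall>m. Suc m < length rs \<longrightarrow> R (rs!m) (rs!Suc m)"
  proof (intro allI impI)
    fix m assume m: "Suc m < length rs"
    have succ: "Suc m mod ?k = Suc m" using m len by simp
    have step: "R' (rs!m) (rs!(Suc m mod ?k))"
      using cyc_rs m len unfolding is_cycle_def by (metis Suc_lessD)
    have "{rs!m, rs!(Suc m mod ?k)} \<noteq> {rs!(?k-1), rs!(Suc (?k-1) mod ?k)}"
      using cycle_pair_eq_imp_eq[of rs m "?k - 1"] dist len m k3 by fastforce
    moreover have "Suc (?k - 1) = ?k" using k3 by simp
    then have "{rs!(?k-1), rs!(Suc (?k-1) mod ?k)} = {c, d}"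
      using last first cd by (auto simp: insert_commute)
    ultimately have "{rs!m, rs!(Suc m mod ?k)} \<noteq> {c, d}" by simp
    then show "R (rs!m) (rs!Suc m)" using R'[OF step] succ by (auto simp: insert_commute)
  qed
  have "rs \<noteq> []" using len k3 by auto
  hence ends: "last rs = ws ! i" "hd rs = ws ! (Suc i mod ?k)" "rs \<noteq> []"
    using last first len by (simp_all add: last_conv_nth hd_conv_nth)
  have ab_rs: "a \<notin> set rs" "b \<notin> set rs" using ab set_rs by auto
  from cd show ?thesis
  proof
    assume "ws!i = c \<and> ws!(Suc i mod ?k) = d"
    hence "is_cycle R (rs @ [a,b])"
      using is_cycle_append_two[OF dist ends(3) path_rs] ends path ab ab_rs by auto
    thus ?thesis using len set_rs by (intro exI[of _ "rs @ [a,b]"]) auto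
  next
    assume "ws!i = d \<and> ws!(Suc i mod ?k) = c"
    hence "is_cycle R (rs @ [b,a])"
      using is_cycle_append_two[OF dist ends(3) path_rs] ends path sym ab ab_rs by auto
    thus ?thesis using len set_rs by (intro exI[of _ "rs @ [b,a]"]) auto
  qed
qed


lemma card_2_obtain_other:
  assumes "card A = 2" "a \<in> A"
  obtains d where "A = {a, d}" "d \<noteq> a"
  using assms by (auto simp: card_2_iff)

lemma card_2_eq_pair: "card A = 2 \<Longrightarrow> x \<in> A \<Longrightarrow> y \<in> A \<Longrightarrow> x \<noteq> y \<Longrightarrow> A = {x, y}"
  by (auto simp: card_2_iff)

lemma suppress_path_two_regular:
  assumes deg: "\<And>x. x \<in> C \<Longrightarrow> card {y\<in>C. R x y} = 2"
    and sym: "\<And>x y. R x y \<Longrightarrow> R y x" and irrefl: "\<And>x. \<not> R x x"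
    and nbs_a: "{y\<in>C. R a y} = {b, c}" and nbs_b: "{y\<in>C. R b y} = {a, d}"
    and cd: "c \<noteq> d" "\<not> R c d"
    and x: "x \<in> C - {a, b}"
  shows "card {y \<in> C - {a, b}. R x y \<or> (x = c \<and> y = d) \<or> (x = d \<and> y = c)} = 2"
proof -
  have "a \<in> {y\<in>C. R b y}" "b \<in> {y\<in>C. R a y}" "c \<in> {y\<in>C. R a y}" "d \<in> {y\<in>C. R b y}"
    using nbs_a nbs_b by auto
  then have "a \<in> C" "b \<in> C" and cC: "c \<in> C" "R c a" and dC: "d \<in> C" "R d b"
    using sym by auto
  have "R a b" "R a c" "R b d" using nbs_a nbs_b by blast+
  then have "a \<noteq> b" "a \<noteq> c" "b \<noteq> d" using irrefl by metis+
  moreover have "card {b, c} = 2" "card {a, d} = 2"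
    using deg[OF \<open>a \<in> C\<close>] deg[OF \<open>b \<in> C\<close>] nbs_a nbs_b by simp_all
  then have "b \<noteq> c" "d \<noteq> a" by (auto simp: card_insert_if split: if_splits)
  ultimately have neq: "a \<noteq> b" "a \<noteq> c" "b \<noteq> c" "b \<noteq> d" "d \<noteq> a" "d \<noteq> c"
    using cd(1) by simp_all
  have "a \<in> {y\<in>C. R c y}" using cC \<open>a \<in> C\<close> by blast
  then obtain e where nbs_c: "{y\<in>C. R c y} = {a, e}" "e \<noteq> a"
    by (rule card_2_obtain_other[OF deg[OF cC(1)]])
  have "b \<in> {y\<in>C. R d y}" using dC \<open>b \<in> C\<close> by blast
  then obtain f where nbs_d: "{y\<in>C. R d y} = {b, f}" "f \<noteq> b"
    by (rule card_2_obtain_other[OF deg[OF dC(1)]])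
  have eC: "e \<in> C" "R c e" and fC: "f \<in> C" "R d f" using nbs_c(1) nbs_d(1) by blast+
  have "e \<noteq> b"
  proof
    assume "e = b"
    then have "c \<in> {y\<in>C. R b y}" using eC sym[of c e] cC by simp
    then show False using nbs_b(1) neq by auto
  qed
  have "f \<noteq> a"
  proof
    assume "f = a"
    then have "d \<in> {y\<in>C. R a y}" using fC sym[of d f] dC by simp
    then show False using nbs_a(1) neq by auto
  qed
  consider "x = c" | "x = d" | "x \<noteq> c" "x \<noteq> d" by blast
  then show ?thesis
  proof cases
    case 1
    have "{y\<in>C. R c y} - {a, b} = {e}" using nbs_c \<open>e \<noteq> b\<close> by auto
    then have "{y \<in> C - {a, b}. R x y \<or> (x = c \<and> y = d) \<or> (x = d \<and> y = c)} = {e, d}"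
      using 1 neq dC by blast
    moreover have "e \<noteq> d" using cd(2) eC by auto
    ultimately show ?thesis by simp
  next
    case 2
    have "{y\<in>C. R d y} - {a, b} = {f}" using nbs_d \<open>f \<noteq> a\<close> by auto
    then have "{y \<in> C - {a, b}. R x y \<or> (x = c \<and> y = d) \<or> (x = d \<and> y = c)} = {f, c}"
      using 2 neq cC by blast
    moreover have "f \<noteq> c" using cd(2) fC sym[of d f] by auto
    ultimately show ?thesis by simp
  next
    case 3
    have "{y \<in> C - {a, b}. R x y \<or> (x = c \<and> y = d) \<or> (x = d \<and> y = c)} = {y\<in>C. R x y}"
      using 3 x sym nbs_a nbs_b by blast
    then show ?thesis using deg x by simp
  qed
qed

text \<open>Take a path c-a-b-d. If c = d it closes a triangle; if c and d are adjacent the four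
  vertices form a component that can be discarded; otherwise replacing the path by an edge cd
  yields a smaller 2-regular relation on an odd set, and the path is reinserted afterwards.\<close>
lemma two_regular_odd_card_has_odd_cycle:
  assumes "finite C" "odd (card C)" "\<And>x. x \<in> C \<Longrightarrow> card {y\<in>C. R x y} = 2"
    "\<And>x y. R x y \<Longrightarrow> R y x" "\<And>x. \<not> R x x"
  shows "\<exists>ws. is_cycle R ws \<and> odd (length ws) \<and> set ws \<subseteq> C"
  using assms
proof (induction "card C" arbitrary: C R rule: less_induct)
  case less
  note fin = less.prems(1) and odd = less.prems(2) and deg = less.prems(3)
    and sym = less.prems(4) and irrefl = less.prems(5)
  obtain a where aC: "a \<in> C" using odd by fastforce
  obtain b c where nbs_a: "{y\<in>C. R a y} = {b, c}" "b \<noteq> c"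
    using deg[OF aC] unfolding card_2_iff by blast
  have bc: "b \<in> C" "R a b" "c \<in> C" "R a c" using nbs_a(1) by blast+
  have "a \<in> {y\<in>C. R b y}" using aC bc sym by blast
  then obtain d where nbs_b: "{y\<in>C. R b y} = {a, d}" "d \<noteq> a"
    using card_2_obtain_other deg[OF bc(1)] by metis
  have dC: "d \<in> C" "R b d" using nbs_b(1) by blast+
  have neq: "a \<noteq> b" "a \<noteq> c" "b \<noteq> d" using bc dC irrefl by metis+
  consider "d = c" | "d \<noteq> c" "R c d" | "d \<noteq> c" "\<not> R c d" by blast
  then show ?case
  proof cases
    case 1
    have "is_cycle R [a, b, c]"
      unfolding is_cycle_def
    proof (intro conjI allI impI)
      fix i assume "i < length [a, b, c]"
      hence "i = 0 \<or> i = 1 \<or> i = 2" by auto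
      then show "R ([a, b, c] ! i) ([a, b, c] ! (Suc i mod length [a, b, c]))"
        using bc dC 1 sym by auto
    qed (use neq nbs_a(2) in auto)
    then show ?thesis using aC bc by (intro exI[of _ "[a,b,c]"]) auto
  next
    case 2
    have nbs_c: "{y\<in>C. R c y} = {a, d}"
      using card_2_eq_pair[OF deg[OF bc(3)], of a d] aC dC 2 sym bc nbs_b(2) by simp
    have nbs_d: "{y\<in>C. R d y} = {b, c}"
      using card_2_eq_pair[OF deg[OF dC(1)], of b c] bc dC 2 sym nbs_a(2) by simp
    define C' where "C' = C - {a, b, c, d}"
    have sub: "{a, b, c, d} \<subseteq> C" using aC bc dC by auto
    have "card {a, b, c, d} = 4" using neq nbs_a(2) 2 nbs_b(2) by auto
    hence card_C': "card C' = card C - 4" "4 \<le> card C"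
      unfolding C'_def using card_Diff_subset[OF _ sub] card_mono[OF fin sub] by auto
    have "{y\<in>C'. R x y} = {y\<in>C. R x y}" if "x \<in> C'" for x
      using that sym nbs_a(1) nbs_b(1) nbs_c nbs_d unfolding C'_def by blast
    then have "\<exists>ws. is_cycle R ws \<and> odd (length ws) \<and> set ws \<subseteq> C'"
      using less.hyps[of C' R] card_C' odd fin deg sym irrefl unfolding C'_def by auto
    then show ?thesis unfolding C'_def by blast
  next
    case 3
    define R' where "R' x y \<longleftrightarrow> R x y \<or> (x = c \<and> y = d) \<or> (x = d \<and> y = c)" for x y
    define C' where "C' = C - {a, b}"
    have sym': "R' x y \<Longrightarrow> R' y x" for x y using sym unfolding R'_def by blast
    have irrefl': "\<not> R' x x" for x using irrefl 3 unfolding R'_def by blast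
    have deg': "card {y\<in>C'. R' x y} = 2" if "x \<in> C'" for x
      using suppress_path_two_regular[OF deg sym irrefl nbs_a(1) nbs_b(1)] 3 that
      unfolding R'_def C'_def by blast
    have "{a, b, c} \<subseteq> C" using aC bc by auto
    from card_mono[OF fin this] have "3 \<le> card C" using neq nbs_a(2) by simp
    moreover have "card C' = card C - 2"
      unfolding C'_def using card_Diff_subset[of "{a,b}" C] aC bc neq by simp
    ultimately have "card C' < card C" "odd (card C')" using odd by auto
    moreover have "finite C'" using fin unfolding C'_def by simp
    ultimately obtain ws where ws: "is_cycle R' ws" "odd (length ws)" "set ws \<subseteq> C'"
      using less.hyps[OF _ _ _ deg' sym' irrefl'] by blast
    have R'_cases: "R x y \<or> (x = c \<and> y = d) \<or> (x = d \<and> y = c)" if "R' x y" for x y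
      using that unfolding R'_def .
    have "a \<notin> set ws" "b \<notin> set ws" using ws(3) unfolding C'_def by auto
    then obtain ws' where "is_cycle R ws'" "length ws' = length ws \<or> length ws' = length ws + 2"
        "set ws' \<subseteq> set ws \<union> {a, b}"
      using is_cycle_reroute_edge[OF ws(1) R'_cases sym sym[OF bc(4)] bc(2) dC(2)] neq(1)
      by blast
    then show ?thesis using ws aC bc unfolding C'_def by (intro exI[of _ ws']) auto
  qed
qed


section \<open>Cliques in diamond-free graphs\<close>

lemma adj_commute: "adj E u v \<longleftrightarrow> adj E v u"
  unfolding adj_def by (simp add: insert_commute)

lemma adj_induced_edges: "adj (induced_edges E S) u v \<longleftrightarrow> adj E u v \<and> u \<in> S \<and> v \<in> S"
  unfolding adj_def induced_edges_def by auto

lemma graph_not_adj_self: "graph V E \<Longrightarrow> \<not> adj E x x"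
  unfolding graph_def adj_def by fastforce

lemma graph_adj_in_vertices: "graph V E \<Longrightarrow> adj E x y \<Longrightarrow> x \<in> V \<and> y \<in> V"
  unfolding graph_def adj_def by blast

lemma graph_edge_neq: "graph V E \<Longrightarrow> {x, y} \<in> E \<Longrightarrow> x \<noteq> y"
  unfolding graph_def by fastforce

lemma graph_induced_edges_self: "graph V E \<Longrightarrow> induced_edges E V = E"
  unfolding graph_def induced_edges_def by auto

lemma diamond_free_induced: "diamond_free V E \<Longrightarrow> S \<subseteq> V \<Longrightarrow> diamond_free S (induced_edges E S)"
  unfolding diamond_free_def adj_induced_edges by blast

lemma graph_edge_is_clique: "graph V E \<Longrightarrow> {x, y} \<in> E \<Longrightarrow> is_clique V E {x, y}"
  unfolding graph_def is_clique_def adj_def by (auto simp: insert_commute)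

lemma is_clique_extends_maximal:
  assumes "finite V" "is_clique V E K"
  obtains Q where "maximal_clique V E Q" "K \<subseteq> Q"
proof -
  let ?A = "{K'. is_clique V E K' \<and> K \<subseteq> K'}"
  have "?A \<subseteq> Pow V" unfolding is_clique_def by auto
  hence fin: "finite ?A" using assms(1) by (meson finite_Pow_iff finite_subset)
  have "K \<in> ?A" using assms(2) by auto
  then obtain Q where Q: "Q \<in> ?A" "\<forall>Q'\<in>?A. Q \<subseteq> Q' \<longrightarrow> Q = Q'"
    using finite_has_maximal[OF fin] by blast
  then have "maximal_clique V E Q" unfolding maximal_clique_def using order_trans by blast
  then show thesis using that Q(1) by blast
qed

lemma graph_edge_in_maximal_clique:
  assumes "graph V E" "{x, y} \<in> E"
  obtains Q where "maximal_clique V E Q" "{x, y} \<subseteq> Q"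
  using assms graph_edge_is_clique is_clique_extends_maximal unfolding graph_def by metis

text \<open>Two distinct maximal cliques sharing an edge would contain a diamond.\<close>
lemma diamond_free_maximal_clique_unique:
  assumes df: "diamond_free V E" and K1: "maximal_clique V E K1" and K2: "maximal_clique V E K2"
    and xy: "x \<noteq> y" "x \<in> K1" "y \<in> K1" "x \<in> K2" "y \<in> K2"
  shows "K1 = K2"
proof (rule ccontr)
  assume "K1 \<noteq> K2"
  then obtain p where p: "p \<in> K1" "p \<notin> K2" using K1 K2 unfolding maximal_clique_def by blast
  have c1: "is_clique V E K1" and c2: "is_clique V E K2"
    using K1 K2 unfolding maximal_clique_def by auto
  have "\<not> is_clique V E (insert p K2)" using K2 p unfolding maximal_clique_def by blast
  moreover have "insert p K2 \<subseteq> V" using c1 c2 p unfolding is_clique_def by blast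
  ultimately obtain q where q: "q \<in> K2" "q \<noteq> p" "\<not> adj E p q"
    using c2 unfolding is_clique_def by (auto simp: adj_commute)
  have px: "adj E x p" "adj E y p" using c1 xy p unfolding is_clique_def by metis+
  have "q \<noteq> x" "q \<noteq> y" using q px adj_commute by metis+
  moreover have "adj E x y" "adj E x q" "adj E y q"
    using c2 xy q calculation unfolding is_clique_def by (metis adj_commute)+
  moreover have "x \<in> V" "y \<in> V" "p \<in> V" "q \<in> V" "p \<noteq> x" "p \<noteq> y"
    using c1 c2 xy p q unfolding is_clique_def by auto
  ultimately show False using df xy px q unfolding diamond_free_def
    by (metis (no_types, lifting) distinct_length_2_or_more distinct_singleton)
qed

lemma maximal_clique_pair_no_common_neighbour:
  assumes g: "graph V E" and max: "maximal_clique V E {u, v}" and z: "adj E u z" "adj E v z"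
  shows False
proof -
  have "z \<noteq> u" "z \<noteq> v" using z graph_not_adj_self[OF g] by metis+
  have "is_clique V E (insert z {u, v})"
  proof -
    have "is_clique V E {u, v}" using max unfolding maximal_clique_def by blast
    moreover have "z \<in> V" using graph_adj_in_vertices[OF g z(1)] by blast
    ultimately show ?thesis using z unfolding is_clique_def by (auto simp: adj_commute)
  qed
  then have "insert z {u, v} = {u, v}" using max unfolding maximal_clique_def by blast
  with \<open>z \<noteq> u\<close> \<open>z \<noteq> v\<close> show False by auto
qed

lemma no_common_neighbour_maximal_clique:
  assumes g: "graph V E" and e: "{x, y} \<in> E" and n: "\<not> (\<exists>z\<in>V. adj E x z \<and> adj E y z)"
  shows "maximal_clique V E {x, y}"
  unfolding maximal_clique_def
proof (intro conjI allI impI)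
  show "is_clique V E {x, y}" using graph_edge_is_clique[OF g e] .
  fix K assume K: "is_clique V E K \<and> {x, y} \<subseteq> K"
  show "K = {x, y}"
  proof (rule ccontr)
    assume "K \<noteq> {x, y}"
    then obtain z where "z \<in> K" "z \<noteq> x" "z \<noteq> y" using K by blast
    then have "z \<in> V" "adj E x z" "adj E y z" using K unfolding is_clique_def by auto
    with n show False by blast
  qed
qed


section \<open>Odd clique cycles and balancedness\<close>

lemma cycle_edges_card_2:
  assumes "distinct ws" "3 \<le> length ws" "e \<in> cycle_edges ws"
  shows "card e = 2"
proof -
  obtain i where i: "i < length ws" "e = {ws!i, ws!(Suc i mod length ws)}"
    using assms(3) unfolding cycle_edges_conv_image by blast
  have "Suc i mod length ws < length ws" using i(1) by (intro mod_less_divisor) linarith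
  moreover have "i \<noteq> Suc i mod length ws" using i(1) assms(2) by (auto simp: Suc_mod_if)
  ultimately show ?thesis using i assms(1) by (simp add: nth_eq_iff_index_eq)
qed

lemma card_cycle_edges_containing:
  assumes dist: "distinct ws" and len: "3 \<le> length ws" and v: "v \<in> set ws"
  shows "card {e \<in> cycle_edges ws. v \<in> e} = 2"
proof -
  let ?k = "length ws"
  define edge where "edge i = {ws!i, ws!(Suc i mod ?k)}" for i
  have succ: "Suc i mod ?k < ?k" for i using len by (intro mod_less_divisor) linarith
  obtain i where i: "i < ?k" "v = ws!i" using v by (auto simp: in_set_conv_nth)
  define p where "p = (if i = 0 then ?k - 1 else i - 1)"
  have p: "p < ?k" "Suc p mod ?k = i"
    using Suc_mod_eq_iff_prev[OF i(1)] i(1) len unfolding p_def by auto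
  have "{e \<in> cycle_edges ws. v \<in> e} = {edge i, edge p}"
  proof (intro set_eqI iffI)
    fix e assume "e \<in> {e \<in> cycle_edges ws. v \<in> e}"
    then obtain j where j: "j < ?k" "e = edge j" "v \<in> edge j"
      unfolding cycle_edges_conv_image edge_def by auto
    hence "i = j \<or> i = Suc j mod ?k"
      using dist i succ unfolding edge_def by (auto simp: nth_eq_iff_index_eq)
    hence "j = i \<or> j = p" using Suc_mod_eq_iff_prev[OF i(1) j(1)] p_def by auto
    thus "e \<in> {edge i, edge p}" using j by auto
  next
    fix e assume "e \<in> {edge i, edge p}"
    thus "e \<in> {e \<in> cycle_edges ws. v \<in> e}"
      using i p unfolding cycle_edges_conv_image edge_def by auto
  qed
  moreover have "edge i \<noteq> edge p"
  proof
    assume "edge i = edge p"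
    hence "i = p" using cycle_pair_eq_imp_eq[OF dist len i(1) p(1)] unfolding edge_def by simp
    thus False using p(2) i(1) len by (auto simp: Suc_mod_if split: if_splits)
  qed
  ultimately show ?thesis by simp
qed

lemma graph_induced: "graph V E \<Longrightarrow> S \<subseteq> V \<Longrightarrow> graph S (induced_edges E S)"
  unfolding graph_def induced_edges_def by (auto intro: finite_subset)

definition free_edge :: "'a set set \<Rightarrow> 'a set \<Rightarrow> 'a \<Rightarrow> 'a \<Rightarrow> bool" where
  "free_edge E T x y \<longleftrightarrow> {x, y} \<in> E \<and> \<not> (\<exists>z\<in>T. adj E x z \<and> adj E y z)"

text \<open>The consecutive pairs of such a cycle are maximal cliques of the subgraph it induces, so
  its edge-vertex incidence matrix is an odd square submatrix of that subgraph's clique matrix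
  with two ones in every row and column.\<close>
definition odd_clique_cycle :: "'a set \<Rightarrow> 'a set set \<Rightarrow> 'a list \<Rightarrow> bool" where
  "odd_clique_cycle V E ws \<longleftrightarrow> is_cycle (free_edge E (set ws)) ws \<and> odd (length ws) \<and> set ws \<subseteq> V"

lemma free_edge_commute: "free_edge E T x y \<Longrightarrow> free_edge E T y x"
  unfolding free_edge_def by (auto simp: insert_commute)

lemma free_edge_mono: "free_edge E T x y \<Longrightarrow> T' \<subseteq> T \<Longrightarrow> free_edge E T' x y"
  unfolding free_edge_def by blast

lemma odd_clique_cycle_free_edge:
  "odd_clique_cycle V E ws \<Longrightarrow> i < length ws \<Longrightarrow>
    free_edge E (set ws) (ws!i) (ws!(Suc i mod length ws))"
  unfolding odd_clique_cycle_def is_cycle_def by blast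

lemma odd_clique_cycle_cycle_edges_subset:
  assumes "odd_clique_cycle V E ws"
  shows "cycle_edges ws \<subseteq> E"
proof
  fix e assume "e \<in> cycle_edges ws"
  then show "e \<in> E"
    using odd_clique_cycle_free_edge[OF assms] unfolding cycle_edges_conv_image free_edge_def by blast
qed

lemma odd_clique_cycle_edge_maximal:
  assumes g: "graph V E" and cyc: "odd_clique_cycle V E ws" and e: "e \<in> cycle_edges ws"
  shows "maximal_clique (set ws) (induced_edges E (set ws)) e"
proof -
  let ?k = "length ws"
  obtain i where i: "i < ?k" "e = {ws!i, ws!(Suc i mod ?k)}"
    using e unfolding cycle_edges_conv_image by blast
  have "Suc i mod ?k < ?k" using i(1) by (intro mod_less_divisor) linarith
  then have "e \<subseteq> set ws" using i by auto
  moreover have free: "free_edge E (set ws) (ws!i) (ws!(Suc i mod ?k))"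
    using odd_clique_cycle_free_edge[OF cyc i(1)] .
  ultimately have edge: "{ws!i, ws!(Suc i mod ?k)} \<in> induced_edges E (set ws)"
    using i(2) unfolding free_edge_def induced_edges_def by blast
  have "set ws \<subseteq> V" using cyc unfolding odd_clique_cycle_def by simp
  then have graph: "graph (set ws) (induced_edges E (set ws))" using graph_induced[OF g] by blast
  have "\<not> (\<exists>z\<in>set ws. adj (induced_edges E (set ws)) (ws!i) z \<and>
      adj (induced_edges E (set ws)) (ws!(Suc i mod ?k)) z)"
    using free unfolding free_edge_def by (auto simp: adj_induced_edges)
  from no_common_neighbour_maximal_clique[OF graph edge this] show ?thesis using i(2) by simp
qed

lemma odd_clique_cycle_unbalanced:
  assumes g: "graph V E" and cyc: "odd_clique_cycle V E ws"
  shows "\<not> balanced_graph (set ws) (induced_edges E (set ws))"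
proof -
  have dist: "distinct ws" and len: "3 \<le> length ws" and odd: "odd (length ws)"
    using cyc unfolding odd_clique_cycle_def is_cycle_def by auto
  have "cycle_edges ws \<subseteq> {K. maximal_clique (set ws) (induced_edges E (set ws)) K}"
    using odd_clique_cycle_edge_maximal[OF g cyc] by blast
  moreover have "card (cycle_edges ws) = card (set ws)"
    using card_cycle_edges[OF dist len] distinct_card[OF dist] by simp
  moreover have "card {c \<in> set ws. c \<in> e} = 2" if "e \<in> cycle_edges ws" for e
  proof -
    have "e \<subseteq> set ws" using that len unfolding cycle_edges_conv_image
      by (auto intro!: nth_mem mod_less_divisor)
    then have "{c \<in> set ws. c \<in> e} = e" by blast
    then show ?thesis using cycle_edges_card_2[OF dist len that] by simp
  qed
  moreover have "finite (cycle_edges ws)" unfolding cycle_edges_conv_image by simp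
  ultimately show ?thesis
    unfolding balanced_graph_def balanced_matrix_def not_not
    using card_cycle_edges_containing[OF dist len] distinct_card[OF dist] odd
    by (intro exI[of _ "cycle_edges ws"] exI[of _ "set ws"]) auto
qed


lemma shared_row_relation_two_regular:
  assumes unique: "\<And>r1 r2 x y. r1 \<in> R \<Longrightarrow> r2 \<in> R \<Longrightarrow> x \<noteq> y \<Longrightarrow> x \<in> r1 \<Longrightarrow> y \<in> r1 \<Longrightarrow>
      x \<in> r2 \<Longrightarrow> y \<in> r2 \<Longrightarrow> r1 = r2"
    and rows: "\<forall>r\<in>R. card {c\<in>C. c \<in> r} = 2" and cols: "\<forall>c\<in>C. card {r\<in>R. c \<in> r} = 2"
    and x: "x \<in> C"
  shows "card {y\<in>C. x \<noteq> y \<and> (\<exists>r\<in>R. x \<in> r \<and> y \<in> r)} = 2"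
proof -
  have "card {r\<in>R. x \<in> r} = 2" using cols x by blast
  then obtain r1 r2 where r12: "{r\<in>R. x \<in> r} = {r1, r2}" "r1 \<noteq> r2"
    unfolding card_2_iff by blast
  have r1: "r1 \<in> R" "x \<in> r1" and r2: "r2 \<in> R" "x \<in> r2" using r12(1) by blast+
  have "card {c\<in>C. c \<in> r1} = 2" "x \<in> {c\<in>C. c \<in> r1}" using rows r1 x by simp_all
  then obtain y1 where y1: "{c\<in>C. c \<in> r1} = {x, y1}" "y1 \<noteq> x" by (rule card_2_obtain_other)
  have "card {c\<in>C. c \<in> r2} = 2" "x \<in> {c\<in>C. c \<in> r2}" using rows r2 x by simp_all
  then obtain y2 where y2: "{c\<in>C. c \<in> r2} = {x, y2}" "y2 \<noteq> x" by (rule card_2_obtain_other)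
  have "y1 \<noteq> y2"
  proof
    assume "y1 = y2"
    then have "r1 = r2" using unique[of r1 r2 x y1] r1 r2 y1 y2 by blast
    then show False using r12(2) by simp
  qed
  moreover have "{y\<in>C. x \<noteq> y \<and> (\<exists>r\<in>R. x \<in> r \<and> y \<in> r)} = {y1, y2}"
  proof (intro set_eqI iffI)
    fix y assume "y \<in> {y\<in>C. x \<noteq> y \<and> (\<exists>r\<in>R. x \<in> r \<and> y \<in> r)}"
    then obtain r where r: "y \<in> C" "x \<noteq> y" "r \<in> R" "x \<in> r" "y \<in> r" by blast
    then have "r = r1 \<or> r = r2" using r12(1) by blast
    moreover have "y \<in> {c\<in>C. c \<in> r}" using r by simp
    ultimately show "y \<in> {y1, y2}" using y1(1) y2(1) r(2) by auto
  next
    fix y assume "y \<in> {y1, y2}"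
    then show "y \<in> {y\<in>C. x \<noteq> y \<and> (\<exists>r\<in>R. x \<in> r \<and> y \<in> r)}"
      using y1 y2 r1 r2 by blast
  qed
  ultimately show ?thesis by simp
qed

text \<open>A common neighbour of x and y in T would put a third vertex of T into the unique maximal
  clique through the edge xy.\<close>
lemma maximal_clique_free_edge:
  assumes g: "graph V E" and df: "diamond_free V E" and S: "S \<subseteq> V" and T: "T \<subseteq> S"
    and r: "maximal_clique S (induced_edges E S) r" and xy: "x \<in> r" "y \<in> r" "x \<noteq> y"
    and only: "r \<inter> T \<subseteq> {x, y}"
  shows "free_edge E T x y"
  unfolding free_edge_def
proof
  let ?E = "induced_edges E S"
  have "adj ?E x y" using r xy unfolding maximal_clique_def is_clique_def by blast
  then show xyE: "{x, y} \<in> E" unfolding adj_def induced_edges_def by blast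
  show "\<not> (\<exists>z\<in>T. adj E x z \<and> adj E y z)"
  proof
    assume "\<exists>z\<in>T. adj E x z \<and> adj E y z"
    then obtain z where z: "z \<in> T" "adj E x z" "adj E y z" by blast
    have zxy: "z \<noteq> x" "z \<noteq> y" using z graph_not_adj_self[OF g] by metis+
    have inS: "x \<in> S" "y \<in> S" "z \<in> S"
      using r xy z T unfolding maximal_clique_def is_clique_def by blast+
    have "is_clique S ?E {x, y, z}"
      unfolding is_clique_def using inS z xyE
      by (auto simp: adj_def induced_edges_def insert_commute)
    moreover have "finite S" using g S unfolding graph_def by (blast intro: finite_subset)
    ultimately obtain Q where Q: "maximal_clique S ?E Q" "{x, y, z} \<subseteq> Q"
      using is_clique_extends_maximal by blast
    have "Q = r"
      using diamond_free_maximal_clique_unique[OF diamond_free_induced[OF df S] Q(1) r] Q xy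
      by blast
    then show False using Q(2) z(1) zxy only by blast
  qed
qed

lemma unbalanced_has_odd_clique_cycle:
  assumes g: "graph V E" and df: "diamond_free V E" and S: "S \<subseteq> V"
    and unbalanced: "\<not> balanced_graph S (induced_edges E S)"
  obtains ws where "odd_clique_cycle V E ws" "set ws \<subseteq> S"
proof -
  let ?E = "induced_edges E S"
  obtain R C where RC: "R \<subseteq> {K. maximal_clique S ?E K}" "C \<subseteq> S" "finite C"
    "odd (card C)" "\<forall>r\<in>R. card {c\<in>C. c \<in> r} = 2" "\<forall>c\<in>C. card {r\<in>R. c \<in> r} = 2"
    using unbalanced unfolding balanced_graph_def balanced_matrix_def by blast
  define N where "N x y \<longleftrightarrow> x \<in> C \<and> y \<in> C \<and> x \<noteq> y \<and> (\<exists>r\<in>R. x \<in> r \<and> y \<in> r)" for x y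
  have "card {y\<in>C. N x y} = 2" if "x \<in> C" for x
  proof -
    have "card {y\<in>C. x \<noteq> y \<and> (\<exists>r\<in>R. x \<in> r \<and> y \<in> r)} = 2"
    proof (rule shared_row_relation_two_regular[OF _ RC(5,6) that])
      fix r1 r2 x y assume "r1 \<in> R" "r2 \<in> R" "x \<noteq> y" "x \<in> r1" "y \<in> r1" "x \<in> r2" "y \<in> r2"
      then show "r1 = r2"
        using diamond_free_maximal_clique_unique[OF diamond_free_induced[OF df S]] RC(1) by blast
    qed
    then show ?thesis using that unfolding N_def by simp
  qed
  moreover have "N x y \<Longrightarrow> N y x" "\<not> N x x" for x y unfolding N_def by blast+
  ultimately obtain ws where ws: "is_cycle N ws" "odd (length ws)" "set ws \<subseteq> C"
    using two_regular_odd_card_has_odd_cycle[OF RC(3,4)] by blast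
  have free: "free_edge E (set ws) x y" if "N x y" for x y
  proof -
    obtain r where r: "r \<in> R" "x \<in> r" "y \<in> r" "x \<noteq> y" "x \<in> C" "y \<in> C"
      using \<open>N x y\<close> unfolding N_def by blast
    have "card {c\<in>C. c \<in> r} = 2" using RC(5) r(1) by blast
    then have "{c\<in>C. c \<in> r} = {x, y}" using r by (intro card_2_eq_pair) auto
    then have "r \<inter> C \<subseteq> {x, y}" by blast
    moreover have "maximal_clique S ?E r" using RC(1) r(1) by blast
    ultimately have "free_edge E C x y"
      using maximal_clique_free_edge[OF g df S RC(2)] r(2-4) by blast
    then show ?thesis by (rule free_edge_mono[OF _ ws(3)])
  qed
  have "is_cycle (free_edge E (set ws)) ws" by (rule is_cycle_mono[OF ws(1) free])
  moreover have "set ws \<subseteq> S" using ws(3) RC(2) by blast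
  ultimately show thesis using that ws(2) S unfolding odd_clique_cycle_def by blast
qed


definition odd_clique_critical :: "'a set \<Rightarrow> 'a set set \<Rightarrow> bool" where
  "odd_clique_critical V E \<longleftrightarrow>
    (\<exists>ws. odd_clique_cycle V E ws \<and> set ws = V) \<and> (\<forall>ws. odd_clique_cycle V E ws \<longrightarrow> set ws = V)"

theorem minimally_unbalanced_iff_odd_clique_critical:
  assumes g: "graph V E" and df: "diamond_free V E"
  shows "minimally_unbalanced V E \<longleftrightarrow> odd_clique_critical V E"
  unfolding odd_clique_critical_def
proof
  assume mu: "minimally_unbalanced V E"
  have spans: "set ws = V" if "odd_clique_cycle V E ws" for ws
  proof (rule ccontr)
    assume "set ws \<noteq> V"
    then have "set ws \<subset> V" using that unfolding odd_clique_cycle_def by blast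
    then show False using odd_clique_cycle_unbalanced[OF g that] mu
      unfolding minimally_unbalanced_def by blast
  qed
  have "\<not> balanced_graph V (induced_edges E V)"
    using mu graph_induced_edges_self[OF g] unfolding minimally_unbalanced_def by simp
  then obtain ws where "odd_clique_cycle V E ws"
    using unbalanced_has_odd_clique_cycle[OF g df subset_refl] by blast
  then show "(\<exists>ws. odd_clique_cycle V E ws \<and> set ws = V) \<and>
      (\<forall>ws. odd_clique_cycle V E ws \<longrightarrow> set ws = V)"
    using spans by blast
next
  assume cycles: "(\<exists>ws. odd_clique_cycle V E ws \<and> set ws = V) \<and>
      (\<forall>ws. odd_clique_cycle V E ws \<longrightarrow> set ws = V)"
  then obtain ws where ws: "odd_clique_cycle V E ws" "set ws = V" by blast
  from cycles have spans: "\<And>ws. odd_clique_cycle V E ws \<Longrightarrow> set ws = V" by blast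
  have "\<not> balanced_graph V E"
    using odd_clique_cycle_unbalanced[OF g ws(1)] ws(2) graph_induced_edges_self[OF g] by simp
  moreover have "balanced_graph S (induced_edges E S)" if S: "S \<subset> V" for S
  proof (rule ccontr)
    assume unbalanced: "\<not> balanced_graph S (induced_edges E S)"
    have "S \<subseteq> V" using S by blast
    then obtain ws' where ws': "odd_clique_cycle V E ws'" "set ws' \<subseteq> S"
      by (rule unbalanced_has_odd_clique_cycle[OF g df _ unbalanced])
    have "set ws' = V" by (rule spans[OF ws'(1)])
    with ws'(2) S show False by blast
  qed
  ultimately show "minimally_unbalanced V E" unfolding minimally_unbalanced_def by blast
qed

lemma odd_clique_cycle_length_ne_3:
  assumes cyc: "odd_clique_cycle V E ws"
  shows "length ws \<noteq> 3"
proof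
  assume len: "length ws = 3"
  have f0: "free_edge E (set ws) (ws!0) (ws!1)"
    using odd_clique_cycle_free_edge[OF cyc, of 0] len by simp
  have f1: "free_edge E (set ws) (ws!1) (ws!2)"
    using odd_clique_cycle_free_edge[OF cyc, of 1] len by (simp add: numeral_2_eq_2)
  have f2: "free_edge E (set ws) (ws!2) (ws!0)"
    using odd_clique_cycle_free_edge[OF cyc, of 2] len by simp
  have "adj E (ws!0) (ws!2)" "adj E (ws!1) (ws!2)"
    using f1 f2 unfolding free_edge_def adj_def by (auto simp: insert_commute)
  with f0 have "ws!2 \<notin> set ws" unfolding free_edge_def by blast
  then show False using len by simp
qed

lemma odd_clique_cycle_chord_shortcut:
  assumes cyc: "odd_clique_cycle V E ws"
    and ab: "a < length ws" "b < length ws" "a \<noteq> b" "{ws!a, ws!b} \<notin> cycle_edges ws"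
    and chord: "free_edge E (set ws) (ws!a) (ws!b)"
  obtains ws' where "odd_clique_cycle V E ws'" "length ws' < length ws" "set ws' \<subseteq> set ws"
proof -
  let ?k = "length ws"
  have "b \<noteq> Suc a mod ?k" "a \<noteq> Suc b mod ?k"
    using ab unfolding cycle_edges_conv_image by (auto simp: insert_commute)
  then obtain ws' where ws': "is_cycle (free_edge E (set ws)) ws'" "odd (length ws')"
      "length ws' < ?k" "set ws' \<subseteq> set ws"
    using is_cycle_odd_chord_shortcut[OF _ _ ab(1-3) _ _ chord free_edge_commute[OF chord]] cyc
    unfolding odd_clique_cycle_def by blast
  then have "is_cycle (free_edge E (set ws')) ws'"
    using is_cycle_mono free_edge_mono by metis
  then show thesis using that ws' cyc unfolding odd_clique_cycle_def by blast
qed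


section \<open>Minimally unbalanced graphs are odd holes or HOH-free multisuns\<close>

text \<open>An induced odd hole of a spanning subgraph F of G that is closed under triangles of G is
  an odd clique cycle of G: triangles of G meeting the hole would survive in F as chords.\<close>
lemma hole_odd_clique_cycle:
  assumes g: "graph V E" and S: "S \<subseteq> V" and dist: "distinct hs" and set_hs: "set hs = S"
    and len: "5 \<le> length hs" and odd: "odd (length hs)"
    and hole: "induced_edges F S = cycle_edges hs" and FE: "F \<subseteq> E"
    and closed: "\<And>x y z. {x, y} \<in> F \<Longrightarrow> adj E x z \<Longrightarrow> adj E y z \<Longrightarrow> {x, z} \<in> F \<and> {y, z} \<in> F"
  shows "odd_clique_cycle V E hs"
proof -
  let ?k = "length hs"
  have "free_edge E S (hs!i) (hs!(Suc i mod ?k))" if i: "i < ?k" for i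
    unfolding free_edge_def
  proof
    have succ: "Suc i mod ?k < ?k" using i by (intro mod_less_divisor) linarith
    let ?x = "hs!i" and ?y = "hs!(Suc i mod ?k)"
    have rim: "{?x, ?y} \<in> cycle_edges hs" unfolding cycle_edges_conv_image using i by blast
    then have xyF: "{?x, ?y} \<in> F" using hole unfolding induced_edges_def by blast
    then show "{?x, ?y} \<in> E" using FE by blast
    show "\<not> (\<exists>z\<in>S. adj E ?x z \<and> adj E ?y z)"
    proof
      assume "\<exists>z\<in>S. adj E ?x z \<and> adj E ?y z"
      then obtain z where z: "z \<in> S" "adj E ?x z" "adj E ?y z" by blast
      obtain r where r: "r < ?k" "z = hs!r" using z(1) set_hs by (auto simp: in_set_conv_nth)
      have "z \<noteq> ?x" "z \<noteq> ?y" using z graph_not_adj_self[OF g] by metis+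
      then have "i \<noteq> r" "Suc i mod ?k \<noteq> r" using r by auto
      moreover have "i \<noteq> Suc i mod ?k" using i len by (auto simp: Suc_mod_if)
      moreover have "?x \<in> S" "?y \<in> S" using i succ set_hs by auto
      then have "{?x, z} \<in> cycle_edges hs" "{?y, z} \<in> cycle_edges hs"
        using closed[OF xyF z(2,3)] hole z(1) unfolding induced_edges_def by blast+
      ultimately show False
        using cycle_edges_triangle_free[OF dist _ i succ r(1)] rim len r(2)
        by (simp add: insert_commute)
    qed
  qed
  then show ?thesis
    unfolding odd_clique_cycle_def is_cycle_def using dist len odd set_hs S by simp
qed

lemma sub_multisun_edges_subset: "sub_multisun_edges V E E' \<Longrightarrow> E' \<subseteq> E"
  unfolding sub_multisun_edges_def by blast

text \<open>A triangle of a diamond-free graph lies in a unique maximal clique, whose edges are either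
  all deleted or all kept.\<close>
lemma sub_multisun_edges_triangle_closed:
  assumes g: "graph V E" and df: "diamond_free V E" and sub: "sub_multisun_edges V E E'"
    and t: "{x, y} \<in> E'" "adj E x z" "adj E y z"
  shows "{x, z} \<in> E' \<and> {y, z} \<in> E'"
proof -
  obtain D where D: "D \<subset> inscribed_cliques V E" "E' = E - \<Union> (clique_edges ` D)"
    using sub unfolding sub_multisun_edges_def by blast
  have Dmax: "maximal_clique V E Q" if "Q \<in> D" for Q
    using D(1) that unfolding inscribed_cliques_def by blast
  have xyE: "{x, y} \<in> E" using t(1) D(2) by blast
  have xy: "x \<noteq> y" using graph_edge_neq[OF g xyE] .
  have "z \<noteq> x" "z \<noteq> y" using t graph_not_adj_self[OF g] by metis+
  have "is_clique V E {x, y, z}"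
    using graph_adj_in_vertices[OF g] t(2,3) xyE
    unfolding is_clique_def adj_def by (auto simp: insert_commute)
  moreover have "finite V" using g unfolding graph_def by blast
  ultimately obtain Q where Q: "maximal_clique V E Q" "{x, y, z} \<subseteq> Q"
    using is_clique_extends_maximal by blast
  have "Q \<notin> D"
  proof
    assume "Q \<in> D"
    then have "{x, y} \<in> \<Union> (clique_edges ` D)" using Q(2) xy unfolding clique_edges_def by auto
    then show False using t(1) D(2) by blast
  qed
  have "{p, z} \<in> E'" if p: "p \<in> {x, y}" for p
  proof (rule ccontr)
    assume "{p, z} \<notin> E'"
    moreover have "{p, z} \<in> E" using p t(2,3) unfolding adj_def by auto
    ultimately obtain Q' where Q': "Q' \<in> D" "{p, z} \<subseteq> Q'"
      using D(2) unfolding clique_edges_def by blast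
    have "p \<noteq> z" using p \<open>z \<noteq> x\<close> \<open>z \<noteq> y\<close> by auto
    then have "Q' = Q"
      using diamond_free_maximal_clique_unique[OF df Dmax[OF Q'(1)] Q(1)] Q'(2) Q(2) p by blast
    then show False using Q'(1) \<open>Q \<notin> D\<close> by simp
  qed
  then show ?thesis by blast
qed


lemma maximal_clique_two_vertices:
  assumes g: "graph V E" and K: "maximal_clique V E K" and V: "V \<noteq> {}"
    and edges: "\<And>v. v \<in> V \<Longrightarrow> \<exists>w. {v, w} \<in> E"
  obtains u v where "u \<in> K" "v \<in> K" "u \<noteq> v"
proof -
  have "K \<noteq> {}"
  proof
    assume "K = {}"
    moreover obtain v where "v \<in> V" using V by blast
    then have "is_clique V E {v}" unfolding is_clique_def by auto
    ultimately show False using K unfolding maximal_clique_def by blast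
  qed
  then obtain u where u: "u \<in> K" by blast
  then have "u \<in> V" using K unfolding maximal_clique_def is_clique_def by blast
  then obtain w where w: "{u, w} \<in> E" using edges by blast
  have "K \<noteq> {u}"
  proof
    assume "K = {u}"
    moreover have "is_clique V E {u, w}" by (rule graph_edge_is_clique[OF g w])
    ultimately have "{u, w} = K" using K unfolding maximal_clique_def by blast
    then show False using \<open>K = {u}\<close> graph_edge_neq[OF g w] by auto
  qed
  then obtain v where "v \<in> K" "v \<noteq> u" using u by blast
  then show thesis using that u by blast
qed

locale critical_odd_clique_cycle =
  fixes V :: "'a set" and E :: "'a set set" and ws :: "'a list"
  assumes graph: "graph V E" and diamond_free: "diamond_free V E"
    and cycle: "odd_clique_cycle V E ws" and spanning: "set ws = V"
    and critical: "\<And>ws'. odd_clique_cycle V E ws' \<Longrightarrow> set ws' = V"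
begin

lemma cycle_distinct: "distinct ws" and cycle_length_ge_3: "3 \<le> length ws"
  and cycle_odd_length: "odd (length ws)"
  using cycle unfolding odd_clique_cycle_def is_cycle_def by auto

lemma rim_subset: "cycle_edges ws \<subseteq> E"
  using odd_clique_cycle_cycle_edges_subset[OF cycle] .

lemma rim_maximal_clique:
  assumes "e \<in> cycle_edges ws"
  shows "maximal_clique V E e"
proof -
  obtain i where i: "i < length ws" "e = {ws!i, ws!(Suc i mod length ws)}"
    using assms unfolding cycle_edges_conv_image by blast
  from odd_clique_cycle_free_edge[OF cycle i(1)] show ?thesis
    unfolding free_edge_def spanning i(2) using no_common_neighbour_maximal_clique[OF graph] by blast
qed

lemma chord_common_neighbour:
  assumes xy: "x \<in> V" "y \<in> V" "{x, y} \<in> E" "{x, y} \<notin> cycle_edges ws"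
  shows "\<exists>z\<in>V. adj E x z \<and> adj E y z"
proof (rule ccontr)
  assume "\<not> (\<exists>z\<in>V. adj E x z \<and> adj E y z)"
  then have chord: "free_edge E (set ws) x y" using xy(3) spanning unfolding free_edge_def by blast
  obtain a b where a: "a < length ws" "x = ws!a" and b: "b < length ws" "y = ws!b"
    using xy(1,2) spanning by (metis in_set_conv_nth)
  have "a \<noteq> b" using graph_edge_neq[OF graph xy(3)] a b by auto
  then obtain ws' where ws': "odd_clique_cycle V E ws'" "length ws' < length ws"
    using odd_clique_cycle_chord_shortcut[OF cycle a(1) b(1)] xy(4) chord a b by metis
  have "card (set ws') = length ws'" "card V = length ws"
    using ws'(1) cycle_distinct spanning unfolding odd_clique_cycle_def is_cycle_def
    by (auto simp: distinct_card)
  then show False using critical[OF ws'(1)] ws'(2) by simp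
qed

lemma inscribed_clique_avoids_rim:
  assumes K: "maximal_clique V E K" "card K \<noteq> 2" and uv: "u \<in> K" "v \<in> K" "u \<noteq> v"
  shows "{u, v} \<notin> cycle_edges ws"
proof
  assume "{u, v} \<in> cycle_edges ws"
  then have "maximal_clique V E {u, v}" by (rule rim_maximal_clique)
  moreover have "is_clique V E K" using K(1) unfolding maximal_clique_def by blast
  ultimately have "K = {u, v}" using uv unfolding maximal_clique_def by blast
  then show False using K(2) uv(3) by simp
qed

lemma pair_maximal_cliques_eq_rim: "{K. maximal_clique V E K \<and> card K = 2} = cycle_edges ws"
proof (intro set_eqI iffI)
  fix K assume "K \<in> {K. maximal_clique V E K \<and> card K = 2}"
  then have K: "maximal_clique V E K" "card K = 2" by auto
  then obtain x y where xy: "K = {x, y}" "x \<noteq> y" unfolding card_2_iff by blast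
  have "is_clique V E K" using K unfolding maximal_clique_def by blast
  then have "{x, y} \<in> E" "x \<in> V" "y \<in> V" using xy unfolding is_clique_def adj_def by auto
  moreover have "\<not> (\<exists>z. adj E x z \<and> adj E y z)"
    using maximal_clique_pair_no_common_neighbour[OF graph] K(1) xy(1) by blast
  ultimately show "K \<in> cycle_edges ws" using chord_common_neighbour xy(1) by blast
next
  fix K assume K: "K \<in> cycle_edges ws"
  then show "K \<in> {K. maximal_clique V E K \<and> card K = 2}"
    using rim_maximal_clique cycle_edges_card_2[OF cycle_distinct cycle_length_ge_3] by blast
qed

lemma multisun: "multisun V E"
  unfolding multisun_def
proof (intro conjI exI[of _ ws])
  show "odd (card V)" using cycle_odd_length distinct_card[OF cycle_distinct] spanning by simp
  show "\<forall>K. maximal_clique V E K \<and> card K \<noteq> 2 \<longrightarrow>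
      (\<forall>u\<in>K. \<forall>v\<in>K. u \<noteq> v \<longrightarrow> {u, v} \<notin> cycle_edges ws)"
    using inscribed_clique_avoids_rim by blast
qed (use diamond_free cycle_distinct spanning cycle_length_ge_3 rim_subset
    pair_maximal_cliques_eq_rim in auto)

lemma induced_odd_hole_spanning:
  assumes F: "F \<subseteq> E"
      "\<And>x y z. {x, y} \<in> F \<Longrightarrow> adj E x z \<Longrightarrow> adj E y z \<Longrightarrow> {x, z} \<in> F \<and> {y, z} \<in> F"
    and S: "S \<subseteq> V" "odd_hole S (induced_edges F S)"
  obtains hs where "distinct hs" "set hs = V" "5 \<le> length hs" "induced_edges F V = cycle_edges hs"
proof -
  obtain hs where hs: "distinct hs" "set hs = S" "5 \<le> length hs" "odd (length hs)"
    "induced_edges F S = cycle_edges hs"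
    using S(2) unfolding odd_hole_def by blast
  have "odd_clique_cycle V E hs" by (rule hole_odd_clique_cycle[OF graph S(1) hs F])
  then have "S = V" using critical hs(2) by blast
  then show thesis using that hs by blast
qed

lemma contains_odd_hole_imp_odd_hole:
  assumes "contains_odd_hole V E"
  shows "odd_hole V E"
proof -
  obtain S where S: "S \<subseteq> V" "odd_hole S (induced_edges E S)"
    using assms unfolding contains_odd_hole_def by blast
  have closed: "{x, z} \<in> E \<and> {y, z} \<in> E" if "adj E x z" "adj E y z" for x y z
    using that unfolding adj_def by blast
  obtain hs where "distinct hs" "set hs = V" "5 \<le> length hs" "induced_edges E V = cycle_edges hs"
    by (rule induced_odd_hole_spanning[OF subset_refl closed S])
  moreover have "odd (length hs)"
    using calculation cycle_odd_length cycle_distinct spanning distinct_card by metis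
  ultimately show ?thesis unfolding odd_hole_def graph_induced_edges_self[OF graph] by blast
qed

lemma rim_vertex_has_edge:
  assumes "v \<in> V"
  shows "\<exists>w. {v, w} \<in> E"
proof -
  obtain i where i: "i < length ws" "v = ws!i" using assms spanning by (metis in_set_conv_nth)
  then have "{ws!i, ws!(Suc i mod length ws)} \<in> E"
    using rim_subset unfolding cycle_edges_conv_image by blast
  then show ?thesis using i(2) by blast
qed

lemma sub_multisun_keeps_rim:
  assumes "sub_multisun_edges V E E'"
  shows "cycle_edges ws \<subseteq> E'"
proof
  obtain D where D: "D \<subset> inscribed_cliques V E" "E' = E - \<Union> (clique_edges ` D)"
    using assms unfolding sub_multisun_edges_def by blast
  fix e assume e: "e \<in> cycle_edges ws"
  show "e \<in> E'"
  proof (rule ccontr)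
    assume "e \<notin> E'"
    then obtain Q where Q: "Q \<in> D" "e \<subseteq> Q" "card e = 2"
      using rim_subset e D(2) unfolding clique_edges_def by blast
    then obtain u v where "e = {u, v}" "u \<noteq> v" unfolding card_2_iff by blast
    moreover have "maximal_clique V E Q" "card Q \<noteq> 2"
      using D(1) Q(1) unfolding inscribed_cliques_def by blast+
    ultimately show False using inscribed_clique_avoids_rim Q(2) e by blast
  qed
qed

text \<open>If a sub-multisun had an odd hole, it would span V and equal the rim; but the edges of an
  inscribed clique that is not deleted survive in the sub-multisun and are not rim edges.\<close>
lemma sub_multisun_no_odd_hole:
  assumes sub: "sub_multisun_edges V E E'"
  shows "\<not> contains_odd_hole V E'"
proof
  assume "contains_odd_hole V E'"
  then obtain S where S: "S \<subseteq> V" "odd_hole S (induced_edges E' S)"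
    unfolding contains_odd_hole_def by blast
  obtain D where D: "D \<subset> inscribed_cliques V E" "E' = E - \<Union> (clique_edges ` D)"
    using sub unfolding sub_multisun_edges_def by blast
  have E'E: "E' \<subseteq> E" using sub_multisun_edges_subset[OF sub] .
  obtain hs where hs: "distinct hs" "set hs = V" "5 \<le> length hs"
      "induced_edges E' V = cycle_edges hs"
    using induced_odd_hole_spanning[OF E'E _ S]
      sub_multisun_edges_triangle_closed[OF graph diamond_free sub] by blast
  have E'_hole: "E' = cycle_edges hs"
    using hs(4) E'E graph unfolding induced_edges_def graph_def by blast
  have rim_E': "cycle_edges ws \<subseteq> E'" using sub_multisun_keeps_rim[OF sub] .
  have "card (cycle_edges ws) = card E'"
    using card_cycle_edges[OF cycle_distinct cycle_length_ge_3] card_cycle_edges[OF hs(1)]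
      hs(2,3) E'_hole distinct_card[OF cycle_distinct] distinct_card[OF hs(1)] spanning by simp
  moreover have "finite E'" unfolding E'_hole cycle_edges_conv_image by simp
  ultimately have rim_eq: "cycle_edges ws = E'" using rim_E' card_subset_eq by blast
  obtain P where P: "P \<in> inscribed_cliques V E" "P \<notin> D" using D(1) by blast
  have Pmax: "maximal_clique V E P" "card P \<noteq> 2"
    using P(1) unfolding inscribed_cliques_def by auto
  have "V \<noteq> {}" using spanning cycle_length_ge_3 by auto
  then obtain u v where uv: "u \<in> P" "v \<in> P" "u \<noteq> v"
    using maximal_clique_two_vertices[OF graph Pmax(1)] rim_vertex_has_edge by blast
  have "{u, v} \<in> E" using Pmax(1) uv unfolding maximal_clique_def is_clique_def adj_def by blast
  moreover have "{u, v} \<notin> \<Union> (clique_edges ` D)"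
  proof
    assume "{u, v} \<in> \<Union> (clique_edges ` D)"
    then obtain Q where Q: "Q \<in> D" "u \<in> Q" "v \<in> Q" unfolding clique_edges_def by blast
    have "maximal_clique V E Q" using D(1) Q(1) unfolding inscribed_cliques_def by blast
    then have "Q = P" using diamond_free_maximal_clique_unique[OF diamond_free _ Pmax(1) uv(3)] Q uv
      by blast
    then show False using Q(1) P(2) by simp
  qed
  ultimately have "{u, v} \<in> cycle_edges ws" using rim_eq D(2) by blast
  then show False using inscribed_clique_avoids_rim[OF Pmax uv] by blast
qed

theorem odd_hole_or_HOH_free_multisun: "odd_hole V E \<or> (multisun V E \<and> HOH_free V E)"
  using contains_odd_hole_imp_odd_hole sub_multisun_no_odd_hole multisun unfolding HOH_free_def by blast

end


section \<open>Odd holes and HOH-free multisuns are minimally unbalanced\<close>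

lemma odd_hole_critical:
  assumes g: "graph V E" and hole: "odd_hole V E"
  shows "odd_clique_critical V E"
proof -
  obtain vs where vs: "distinct vs" "set vs = V" "5 \<le> length vs" "odd (length vs)"
    "E = cycle_edges vs"
    using hole unfolding odd_hole_def by blast
  have "odd_clique_cycle V E vs"
    by (rule hole_odd_clique_cycle[OF g subset_refl vs(1-4) _ subset_refl])
      (use graph_induced_edges_self[OF g] vs(5) in \<open>auto simp: adj_def\<close>)
  moreover have "set ws = V" if ws: "odd_clique_cycle V E ws" for ws
  proof -
    have "is_cycle (free_edge E (set ws)) ws" "set ws \<subseteq> V"
      using ws unfolding odd_clique_cycle_def by auto
    moreover have "\<forall>i<length ws. {ws!i, ws!(Suc i mod length ws)} \<in> cycle_edges vs"
      using odd_clique_cycle_free_edge[OF ws] vs(5) unfolding free_edge_def by blast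
    ultimately show ?thesis
      using cycle_along_cycle_edges_spans[OF vs(1) _ _] vs(2,3) by simp
  qed
  ultimately show ?thesis unfolding odd_clique_critical_def using vs(2) by blast
qed

locale shortest_proper_odd_clique_cycle =
  fixes V :: "'a set" and E :: "'a set set" and vs ws :: "'a list"
  assumes graph: "graph V E" and diamond_free: "diamond_free V E"
    and rim: "distinct vs" "set vs = V" "3 \<le> length vs"
      "{K. maximal_clique V E K \<and> card K = 2} = cycle_edges vs"
    and cycle: "odd_clique_cycle V E ws" and proper: "set ws \<subset> V"
    and shortest: "\<And>ws'. odd_clique_cycle V E ws' \<Longrightarrow> set ws' \<subset> V \<Longrightarrow> length ws \<le> length ws'"
begin

abbreviation chord :: "'a set \<Rightarrow> bool" where
  "chord e \<equiv> \<exists>a<length ws. \<exists>b<length ws. a \<noteq> b \<and> e = {ws!a, ws!b} \<and> e \<notin> cycle_edges ws"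

definition chord_cliques :: "'a set set" where
  "chord_cliques = {Q \<in> inscribed_cliques V E. \<exists>e. chord e \<and> e \<subseteq> Q}"

lemma cycle_distinct: "distinct ws" and cycle_length_ge_5: "5 \<le> length ws"
  and cycle_odd_length: "odd (length ws)"
proof -
  show "distinct ws" "odd (length ws)" using cycle unfolding odd_clique_cycle_def is_cycle_def by auto
  moreover have "3 \<le> length ws" using cycle unfolding odd_clique_cycle_def is_cycle_def by auto
  ultimately show "5 \<le> length ws" using odd_clique_cycle_length_ne_3[OF cycle] by presburger
qed

lemma chord_not_rim:
  assumes "chord e"
  shows "e \<notin> cycle_edges vs"
proof
  assume e: "e \<in> cycle_edges vs"
  obtain a b where ab: "a < length ws" "b < length ws" "a \<noteq> b" "e = {ws!a, ws!b}"
    "e \<notin> cycle_edges ws" using assms by blast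
  have max: "maximal_clique V E {ws!a, ws!b}" using e rim(4) ab(4) by blast
  have "ws!a \<noteq> ws!b" using ab(1-3) cycle_distinct by (simp add: nth_eq_iff_index_eq)
  then have "adj E (ws!a) (ws!b)" using max unfolding maximal_clique_def is_clique_def by blast
  then have "free_edge E (set ws) (ws!a) (ws!b)"
    using maximal_clique_pair_no_common_neighbour[OF graph max] unfolding free_edge_def adj_def
    by blast
  then obtain ws' where "odd_clique_cycle V E ws'" "length ws' < length ws" "set ws' \<subseteq> set ws"
    using odd_clique_cycle_chord_shortcut[OF cycle ab(1-3)] ab(4,5) by blast
  then show False using shortest proper by fastforce
qed


lemma cycle_edge_not_in_chord_clique:
  assumes i: "i < length ws" and Q: "Q \<in> chord_cliques"
  shows "\<not> {ws!i, ws!(Suc i mod length ws)} \<subseteq> Q"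
proof
  let ?e = "{ws!i, ws!(Suc i mod length ws)}"
  assume eQ: "?e \<subseteq> Q"
  obtain a b where ab: "a < length ws" "b < length ws" "a \<noteq> b" "{ws!a, ws!b} \<notin> cycle_edges ws"
    "ws!a \<in> Q" "ws!b \<in> Q" using Q unfolding chord_cliques_def by blast
  have "?e \<in> cycle_edges ws" using i unfolding cycle_edges_conv_image by blast
  moreover have "ws!a \<noteq> ws!b" using ab(1-3) cycle_distinct by (simp add: nth_eq_iff_index_eq)
  ultimately have "\<not> {ws!a, ws!b} \<subseteq> ?e" using ab(4) by (auto simp: insert_commute)
  then obtain w where w: "w \<in> {ws!a, ws!b}" "w \<notin> ?e" by blast
  have "is_clique V E Q"
    using Q unfolding chord_cliques_def inscribed_cliques_def maximal_clique_def by blast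
  then have "adj E (ws!i) w" "adj E (ws!(Suc i mod length ws)) w"
    using eQ w ab(5,6) unfolding is_clique_def by auto
  moreover have "w \<in> set ws" using w ab(1,2) by auto
  ultimately show False using odd_clique_cycle_free_edge[OF cycle i] unfolding free_edge_def by blast
qed

lemma chord_in_chord_clique:
  assumes e: "chord e" "e \<in> E"
  shows "\<exists>Q\<in>chord_cliques. e \<subseteq> Q"
proof -
  obtain a b where ab: "a < length ws" "b < length ws" "a \<noteq> b" "e = {ws!a, ws!b}"
    using e(1) by blast
  obtain Q where Q: "maximal_clique V E Q" "e \<subseteq> Q"
    using graph_edge_in_maximal_clique[OF graph] e(2) ab(4) by metis
  have "card Q \<noteq> 2"
  proof
    assume "card Q = 2"
    moreover have "card e = 2" using ab cycle_distinct by (simp add: nth_eq_iff_index_eq)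
    ultimately have "e = Q" using Q(2) by (metis card_subset_eq card.infinite zero_neq_numeral)
    then show False using chord_not_rim[OF e(1)] rim(4) Q(1) \<open>card Q = 2\<close> by blast
  qed
  then show ?thesis using Q e(1) unfolding chord_cliques_def inscribed_cliques_def by blast
qed

lemma chord_cliques_proper: "chord_cliques \<subset> inscribed_cliques V E"
proof -
  have "chord_cliques \<subseteq> inscribed_cliques V E" unfolding chord_cliques_def by blast
  moreover have "chord_cliques \<noteq> inscribed_cliques V E"
  proof
    assume all: "chord_cliques = inscribed_cliques V E"
    have "{ws!i, ws!(Suc i mod length ws)} \<in> cycle_edges vs" if i: "i < length ws" for i
    proof -
      let ?e = "{ws!i, ws!(Suc i mod length ws)}"
      have "?e \<in> E" using odd_clique_cycle_free_edge[OF cycle i] unfolding free_edge_def by blast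
      then obtain Q where Q: "maximal_clique V E Q" "?e \<subseteq> Q"
        using graph_edge_in_maximal_clique[OF graph] by metis
      have "Q \<notin> inscribed_cliques V E"
        using cycle_edge_not_in_chord_clique[OF i] Q(2) all by blast
      then have "card Q = 2" using Q(1) unfolding inscribed_cliques_def by blast
      moreover have "card ?e = 2" using graph \<open>?e \<in> E\<close> unfolding graph_def by blast
      ultimately have "?e = Q" using Q(2) by (metis card_subset_eq card.infinite zero_neq_numeral)
      then show ?thesis using rim(4) Q(1) \<open>card Q = 2\<close> by blast
    qed
    then have "set ws = set vs"
      using cycle_along_cycle_edges_spans[OF rim(1,3)] cycle proper rim(2)
      unfolding odd_clique_cycle_def by blast
    then show False using proper rim(2) by simp
  qed
  ultimately show ?thesis by blast
qed

lemma cycle_induced_after_deleting_chord_cliques: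
  "induced_edges (E - \<Union> (clique_edges ` chord_cliques)) (set ws) = cycle_edges ws"
proof (intro set_eqI iffI)
  fix e assume "e \<in> induced_edges (E - \<Union> (clique_edges ` chord_cliques)) (set ws)"
  then have e: "e \<in> E" "e \<subseteq> set ws" "e \<notin> \<Union> (clique_edges ` chord_cliques)"
    unfolding induced_edges_def by auto
  have "card e = 2" using graph e(1) unfolding graph_def by blast
  then obtain x y where xy: "e = {x, y}" "x \<noteq> y" unfolding card_2_iff by blast
  have "x \<in> set ws" "y \<in> set ws" using e(2) xy(1) by auto
  then obtain a b where ab: "a < length ws" "x = ws!a" "b < length ws" "y = ws!b"
    by (auto simp: in_set_conv_nth)
  show "e \<in> cycle_edges ws"
  proof (rule ccontr)
    assume "e \<notin> cycle_edges ws"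
    moreover have "a \<noteq> b" using ab xy(2) by blast
    ultimately have "chord e" using xy(1) ab by blast
    then obtain Q where "Q \<in> chord_cliques" "e \<subseteq> Q" using chord_in_chord_clique e(1) by blast
    then show False using e(3) \<open>card e = 2\<close> unfolding clique_edges_def by blast
  qed
next
  fix e assume "e \<in> cycle_edges ws"
  then obtain i where i: "i < length ws" "e = {ws!i, ws!(Suc i mod length ws)}"
    unfolding cycle_edges_conv_image by blast
  have "e \<in> E" using odd_clique_cycle_free_edge[OF cycle i(1)] i(2) unfolding free_edge_def by blast
  moreover have "e \<notin> \<Union> (clique_edges ` chord_cliques)"
    using cycle_edge_not_in_chord_clique[OF i(1)] i(2) unfolding clique_edges_def by blast
  moreover have "Suc i mod length ws < length ws" using i(1) by (intro mod_less_divisor) linarith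
  then have "e \<subseteq> set ws" using i by auto
  ultimately show "e \<in> induced_edges (E - \<Union> (clique_edges ` chord_cliques)) (set ws)"
    unfolding induced_edges_def by blast
qed

lemma contains_odd_hole_after_deleting_chord_cliques:
  "contains_odd_hole V (E - \<Union> (clique_edges ` chord_cliques))"
  unfolding contains_odd_hole_def odd_hole_def
  using cycle_induced_after_deleting_chord_cliques cycle_distinct cycle_length_ge_5
    cycle_odd_length proper by blast

end

lemma HOH_free_multisun_critical:
  assumes g: "graph V E" and df: "diamond_free V E" and ms: "multisun V E" and hf: "HOH_free V E"
  shows "odd_clique_critical V E"
proof -
  obtain vs where vs: "distinct vs" "set vs = V" "3 \<le> length vs" "cycle_edges vs \<subseteq> E"
    "{K. maximal_clique V E K \<and> card K = 2} = cycle_edges vs"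
    using ms unfolding multisun_def by blast
  have "odd (length vs)" using ms vs(1,2) distinct_card unfolding multisun_def by metis
  moreover have "free_edge E V (vs!i) (vs!(Suc i mod length vs))" if "i < length vs" for i
  proof -
    have e: "{vs!i, vs!(Suc i mod length vs)} \<in> cycle_edges vs"
      using that unfolding cycle_edges_conv_image by blast
    then show ?thesis unfolding free_edge_def
      using vs(4,5) maximal_clique_pair_no_common_neighbour[OF g] by blast
  qed
  ultimately have "odd_clique_cycle V E vs"
    unfolding odd_clique_cycle_def is_cycle_def using vs(1-3) by simp
  moreover have "set ws = V" if ws: "odd_clique_cycle V E ws" for ws
  proof (rule ccontr)
    assume "set ws \<noteq> V"
    then have "\<exists>ws. odd_clique_cycle V E ws \<and> set ws \<subset> V"
      using ws unfolding odd_clique_cycle_def by blast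
    then obtain ws' where ws': "odd_clique_cycle V E ws'" "set ws' \<subset> V"
      and least: "\<And>ws''. odd_clique_cycle V E ws'' \<and> set ws'' \<subset> V \<Longrightarrow> length ws' \<le> length ws''"
      using ex_has_least_nat[of "\<lambda>ws. odd_clique_cycle V E ws \<and> set ws \<subset> V" _ length] by metis
    interpret shortest_proper_odd_clique_cycle V E vs ws'
      using g df vs(1-3,5) ws' least by unfold_locales blast+
    show False
      using contains_odd_hole_after_deleting_chord_cliques chord_cliques_proper hf
      unfolding HOH_free_def sub_multisun_edges_def by (cases "chord_cliques = {}") auto
  qed
  ultimately show ?thesis unfolding odd_clique_critical_def using vs(2) by blast
qed

theorem corollary1:
  fixes V :: "'a set" and E :: "'a set set"
  assumes "graph V E" and "diamond_free V E"
  shows "minimally_unbalanced V E \<longleftrightarrow> odd_hole V E \<or> (multisun V E \<and> HOH_free V E)"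
proof -
  have "odd_clique_critical V E \<longleftrightarrow> odd_hole V E \<or> (multisun V E \<and> HOH_free V E)"
  proof
    assume "odd_clique_critical V E"
    then obtain ws where "critical_odd_clique_cycle V E ws"
      using assms unfolding odd_clique_critical_def critical_odd_clique_cycle_def by blast
    then show "odd_hole V E \<or> (multisun V E \<and> HOH_free V E)"
      by (rule critical_odd_clique_cycle.odd_hole_or_HOH_free_multisun)
  next
    assume "odd_hole V E \<or> (multisun V E \<and> HOH_free V E)"
    then show "odd_clique_critical V E"
      using odd_hole_critical[OF assms(1)] HOH_free_multisun_critical[OF assms] by blast
  qed
  then show ?thesis using minimally_unbalanced_iff_odd_clique_critical[OF assms] by simp
qed

end
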